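(* Every RAD-AG-groupoid $S$ is right distributive, i.e. $(ab)c=(ac)(bc)$ for all $a,b,c\in S$.
   Context: A groupoid is a set $S$ with a binary operation written as juxtaposition; $ab\cdot c$ means $(ab)c$. An AG-groupoid is a groupoid satisfying the left invertive law $(ab)c=(cb)a$ for all $a,b,c\in S$. An RAD-AG-groupoid (right abelian distributive AG-groupoid) is an AG-groupoid satisfying $(ab)c=(ca)(bc)$ for all $a,b,c\in S$. *)

theory Defs
  imports Main
begin

definition AG_groupoid :: "('a \<Rightarrow> 'a \<Rightarrow> 'a) \<Rightarrow> bool" where
  "AG_groupoid m \<longleftrightarrow> (\<forall>a b c. m (m a b) c = m (m c b) a)"

definition RAD_AG_groupoid :: "('a \<Rightarrow> 'a \<Rightarrow> 'a) \<Rightarrow> bool" where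
  "RAD_AG_groupoid m \<longleftrightarrow> AG_groupoid m \<and> (\<forall>a b c. m (m a b) c = m (m c a) (m b c))"

definition right_distributive :: "('a \<Rightarrow> 'a \<Rightarrow> 'a) \<Rightarrow> bool" where
  "right_distributive m \<longleftrightarrow> (\<forall>a b c. m (m a b) c = m (m a c) (m b c))"

end

theory Submission
  imports Defs
begin

(* An AG-groupoid (left invertive law (ab)c = (cb)a) is medial:
   (ab)(cd) = (ac)(bd).  In a RAD-AG-groupoid, the RAD law (ab)c = (ca)(bc)
   together with mediality shows that the two factors of a left factor commute:
   (ab)c = (ca)(bc) = (cb)(ac) = (ba)c.  Applying this to the left factor of the
   RAD law gives (ab)c = (ca)(bc) = (ac)(bc), which is right distributivity. *)

lemma AG_groupoid_left_invertive:
  assumes "AG_groupoid m"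
  shows "m (m a b) c = m (m c b) a"
  using assms unfolding AG_groupoid_def by blast

lemma RAD_AG_groupoid_RAD_law:
  assumes "RAD_AG_groupoid m"
  shows "m (m a b) c = m (m c a) (m b c)"
  using assms unfolding RAD_AG_groupoid_def by blast

(* The medial law (ab)(cd) = (ac)(bd), valid in every AG-groupoid:
   move cd to the front, swap b and d inside it, and move it back. *)
lemma AG_groupoid_medial:
  assumes "AG_groupoid m"
  shows "m (m a b) (m c d) = m (m a c) (m b d)"
proof -
  note left_inv = AG_groupoid_left_invertive [OF assms]
  have "m (m a b) (m c d) = m (m (m c d) b) a" by (rule left_inv)
  also have "\<dots> = m (m (m b d) c) a" by (simp only: left_inv [of c d b])
  also have "\<dots> = m (m a c) (m b d)" by (rule left_inv [symmetric])
  finally show ?thesis .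
qed

lemma RAD_AG_groupoid_left_factor_comm:
  assumes "RAD_AG_groupoid m"
  shows "m (m a b) c = m (m b a) c"
proof -
  have AG: "AG_groupoid m"
    using assms unfolding RAD_AG_groupoid_def by blast
  note RAD = RAD_AG_groupoid_RAD_law [OF assms]
  have "m (m a b) c = m (m c a) (m b c)" by (rule RAD)
  also have "\<dots> = m (m c b) (m a c)" by (rule AG_groupoid_medial [OF AG])
  also have "\<dots> = m (m b a) c" by (rule RAD [symmetric])
  finally show ?thesis .
qed

theorem mainTheorem6:
  fixes m :: "'a \<Rightarrow> 'a \<Rightarrow> 'a"
  assumes "RAD_AG_groupoid m"
  shows "right_distributive m"
  unfolding right_distributive_def
proof (intro allI)
  fix a b c
  have "m (m a b) c = m (m c a) (m b c)"
    by (rule RAD_AG_groupoid_RAD_law [OF assms])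
  also have "\<dots> = m (m a c) (m b c)"
    by (rule RAD_AG_groupoid_left_factor_comm [OF assms])
  finally show "m (m a b) c = m (m a c) (m b c)" .
qed

end
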